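(* Let $A$ be an $m\times m$ coloring matrix, let $m'\ge1$, and let $A'$ be the $(m+m')\times(m+m')$ block matrix $$A'=\left[\begin{array}{c|c}A&0\\\hline \mathbf{1}&I\end{array}\right],$$ where $\mathbf{1}$ is the $m'\times m$ all-ones matrix, $I$ is the $m'\times m'$ identity matrix and the upper right block is zero. Then $$\frac{1}{m'}F_{A'}(x)^2+\left(\frac{m'-2}{m'}F_A(x)-1\right)F_{A'}(x)+\left(F_A(x)-\frac{m'-1}{m'}F_A(x)^2+m'x\right)=0,$$ and consequently $$F_{A'}(x)=\frac{m'-(m'-2)F_A(x)}{2}-\frac{\sqrt{(m'-(m'-2)F_A(x))^2-4(m'F_A(x)-(m'-1)F_A(x)^2+(m')^2x)}}{2}.$$
   Context: A plane tree is an unlabeled rooted tree in which the children of every vertex are linearly ordered. A coloring matrix is a square matrix $A=(a_{ij})$ with entries in $\{0,1\}$. An $A$-coloring of a plane tree assigns to each vertex a color (an index of a row of $A$) such that whenever a vertex of color $j$ is a child of a vertex of color $i$, $a_{ij}=1$. Let $t_A(n)$ be the number of pairs (plane tree with $n$ vertices, $A$-coloring of it), and $F_A(x)=\sum_{n\ge1}t_A(n)x^n$ (formal power series). *)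

theory Defs
  imports "HOL-Computational_Algebra.Formal_Power_Series"
begin

text \<open>A pair (plane tree, colouring) is represented as a vertex-coloured plane tree:
  each node carries its colour (a natural number) and an ordered list of children.\<close>
datatype ctree = CNode nat "ctree list"

fun root_color :: "ctree \<Rightarrow> nat" where
  "root_color (CNode c ts) = c"

fun nverts :: "ctree \<Rightarrow> nat" where
  "nverts (CNode c ts) = Suc (sum_list (map nverts ts))"

fun valid_col :: "nat \<Rightarrow> (nat \<Rightarrow> nat \<Rightarrow> bool) \<Rightarrow> ctree \<Rightarrow> bool" where
  "valid_col m A (CNode c ts) =
     (c < m \<and> (\<forall>t\<in>set ts. A c (root_color t) \<and> valid_col m A t))"

definition tA :: "nat \<Rightarrow> (nat \<Rightarrow> nat \<Rightarrow> bool) \<Rightarrow> nat \<Rightarrow> nat" where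
  "tA m A n = card {T. nverts T = n \<and> valid_col m A T}"

definition FA :: "nat \<Rightarrow> (nat \<Rightarrow> nat \<Rightarrow> bool) \<Rightarrow> real fps" where
  "FA m A = Abs_fps (\<lambda>n. if n = 0 then 0 else of_nat (tA m A n))"

text \<open>The (m+m') x (m+m') block matrix [A 0; 1 I].\<close>
definition ext_matrix :: "nat \<Rightarrow> (nat \<Rightarrow> nat \<Rightarrow> bool) \<Rightarrow> nat \<Rightarrow> nat \<Rightarrow> bool" where
  "ext_matrix m A i j =
     (if i < m then (j < m \<and> A i j) else (if j < m then True else i = j))"

end

theory Submission
  imports Defs
begin

(* A tree coloured by the extended matrix has its root either in an old colour, and is then an
   A-tree, or in a new colour i, in which case every child is an A-tree or again a tree with root
   colour i.  So the series G_i of the latter trees satisfies G_i = x / (1 - F_A - G_i), that is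
   G_i = x + (F_A + G_i) G_i.  This equation has only one solution without constant term, hence
   all G_i agree and F_A' = F_A + m' G.  Eliminating G gives the quadratic equation for F_A', and
   the constant terms F_A'(0) = 0 < m' pick the sign of the square root. *)

definition size_finite :: "ctree set \<Rightarrow> bool" where
  "size_finite S \<longleftrightarrow> (\<forall>n. finite {T \<in> S. nverts T = n})"

definition tree_gf :: "ctree set \<Rightarrow> real fps" where
  "tree_gf S = Abs_fps (\<lambda>n. real (card {T \<in> S. nverts T = n}))"

definition forest_gf :: "ctree set \<Rightarrow> real fps" where
  "forest_gf S = Abs_fps (\<lambda>n. real (card {ts \<in> lists S. sum_list (map nverts ts) = n}))"

definition rooted_trees :: "nat \<Rightarrow> (nat \<Rightarrow> nat \<Rightarrow> bool) \<Rightarrow> nat \<Rightarrow> ctree set" where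
  "rooted_trees M B i = {T. valid_col M B T \<and> root_color T = i}"

lemma nverts_not_0 [simp]: "nverts T \<noteq> 0"
  by (cases T) auto

lemma length_le_forest_size: "length ts \<le> sum_list (map nverts ts)"
proof (induction ts)
  case (Cons t ts)
  have "1 \<le> nverts t"
    using nverts_not_0[of t] by linarith
  with Cons show ?case by simp
qed simp

lemma nverts_le_forest_size: "t \<in> set ts \<Longrightarrow> nverts t \<le> sum_list (map nverts ts)"
  by (simp add: member_le_sum_list)

lemma size_finite_subset:
  assumes "S \<subseteq> S'" "size_finite S'"
  shows "size_finite S"
  unfolding size_finite_def
proof
  fix n
  show "finite {T \<in> S. nverts T = n}"
    by (rule finite_subset[of _ "{T \<in> S'. nverts T = n}"])
      (use assms in \<open>auto simp: size_finite_def\<close>)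
qed

lemma size_finite_Un: "size_finite S \<Longrightarrow> size_finite S' \<Longrightarrow> size_finite (S \<union> S')"
  unfolding size_finite_def by (simp add: Collect_disj_eq conj_disj_distribR)

lemma finite_forests_of_size:
  assumes "size_finite S"
  shows "finite {ts \<in> lists S. sum_list (map nverts ts) = n}"
proof (rule finite_subset)
  let ?S = "\<Union>k\<le>n. {T \<in> S. nverts T = k}"
  show "{ts \<in> lists S. sum_list (map nverts ts) = n} \<subseteq> {ts. set ts \<subseteq> ?S \<and> length ts \<le> n}"
    using length_le_forest_size nverts_le_forest_size by fastforce
  show "finite {ts. set ts \<subseteq> ?S \<and> length ts \<le> n}"
    using assms by (intro finite_lists_length_le) (auto simp: size_finite_def)
qed

lemma size_finite_valid_col: "size_finite {T. valid_col M B T}"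
proof -
  have "finite {T. valid_col M B T \<and> nverts T \<le> n}" for n
  proof (induction n)
    case 0
    show ?case by simp
  next
    case (Suc n)
    let ?S = "{T. valid_col M B T \<and> nverts T \<le> n}"
    have "{T. valid_col M B T \<and> nverts T \<le> Suc n}
            \<subseteq> (\<lambda>(c, ts). CNode c ts) ` ({..<M} \<times> {ts. set ts \<subseteq> ?S \<and> length ts \<le> n})"
    proof
      fix T assume T: "T \<in> {T. valid_col M B T \<and> nverts T \<le> Suc n}"
      obtain c ts where T_eq: "T = CNode c ts" by (cases T)
      have "c < M" "length ts \<le> n"
        using T length_le_forest_size[of ts] by (auto simp: T_eq)
      moreover have "set ts \<subseteq> ?S"
        using T nverts_le_forest_size[of _ ts] by (force simp: T_eq)
      ultimately show "T \<in> (\<lambda>(c, ts). CNode c ts) ` ({..<M} \<times> {ts. set ts \<subseteq> ?S \<and> length ts \<le> n})"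
        unfolding T_eq by (intro image_eqI[where x="(c, ts)"]) auto
    qed
    moreover have "finite ({..<M} \<times> {ts. set ts \<subseteq> ?S \<and> length ts \<le> n})"
      using Suc.IH by (intro finite_cartesian_product finite_lists_length_le) auto
    ultimately show ?case
      using finite_subset finite_imageI by blast
  qed
  then show ?thesis
    unfolding size_finite_def
    by (auto intro: finite_subset[of _ "{T. valid_col M B T \<and> nverts T \<le> _}"])
qed

lemma tree_gf_nth_0 [simp]: "fps_nth (tree_gf S) 0 = 0"
  by (simp add: tree_gf_def)

lemma tree_gf_Un_disjoint:
  assumes "size_finite S" "size_finite S'" "S \<inter> S' = {}"
  shows "tree_gf (S \<union> S') = tree_gf S + tree_gf S'"
proof (rule fps_ext)
  fix n
  have "{T \<in> S \<union> S'. nverts T = n} = {T \<in> S. nverts T = n} \<union> {T \<in> S'. nverts T = n}"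
    by blast
  then show "fps_nth (tree_gf (S \<union> S')) n = fps_nth (tree_gf S + tree_gf S') n"
    using assms by (simp add: tree_gf_def size_finite_def card_Un_disjoint disjoint_iff)
qed

lemma tree_gf_UN_disjoint:
  assumes "finite I" "\<And>i. i \<in> I \<Longrightarrow> size_finite (S i)"
    and "\<And>i j. i \<in> I \<Longrightarrow> j \<in> I \<Longrightarrow> i \<noteq> j \<Longrightarrow> S i \<inter> S j = {}"
  shows "tree_gf (\<Union>i\<in>I. S i) = (\<Sum>i\<in>I. tree_gf (S i))"
proof (rule fps_ext)
  fix n
  have "{T \<in> (\<Union>i\<in>I. S i). nverts T = n} = (\<Union>i\<in>I. {T \<in> S i. nverts T = n})"
    by blast
  moreover have "card (\<Union>i\<in>I. {T \<in> S i. nverts T = n}) = (\<Sum>i\<in>I. card {T \<in> S i. nverts T = n})"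
    using assms unfolding size_finite_def by (intro card_UN_disjoint) blast+
  ultimately show "fps_nth (tree_gf (\<Union>i\<in>I. S i)) n = fps_nth (\<Sum>i\<in>I. tree_gf (S i)) n"
    by (simp add: tree_gf_def fps_sum_nth)
qed

lemma card_forests_of_size:
  assumes "size_finite S"
  shows "card {ts \<in> lists S. sum_list (map nverts ts) = n}
           = (if n = 0 then 1 else 0)
             + (\<Sum>k\<le>n. card {T \<in> S. nverts T = k}
                          * card {ts \<in> lists S. sum_list (map nverts ts) = n - k})"
proof -
  define trees where "trees k = {T \<in> S. nverts T = k}" for k
  define forests where "forests k = {ts \<in> lists S. sum_list (map nverts ts) = k}" for k
  define cons where "cons = (\<lambda>(t :: ctree, ts). t # ts)"
  have fin: "finite (trees k)" "finite (forests k)" for k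
    using assms finite_forests_of_size by (auto simp: trees_def forests_def size_finite_def)
  have split: "forests n = (if n = 0 then {[]} else {}) \<union> (\<Union>k\<le>n. cons ` (trees k \<times> forests (n - k)))"
  proof (intro equalityI subsetI)
    fix ts assume ts: "ts \<in> forests n"
    show "ts \<in> (if n = 0 then {[]} else {}) \<union> (\<Union>k\<le>n. cons ` (trees k \<times> forests (n - k)))"
    proof (cases ts)
      case Nil
      then show ?thesis using ts by (simp add: forests_def)
    next
      case (Cons t ts')
      then have "(t, ts') \<in> trees (nverts t) \<times> forests (n - nverts t)" "nverts t \<le> n"
        using ts by (auto simp: trees_def forests_def)
      then show ?thesis
        unfolding Cons cons_def by blast
    qed
  qed (auto simp: trees_def forests_def cons_def split: if_splits)
  have "card (\<Union>k\<le>n. cons ` (trees k \<times> forests (n - k)))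
          = (\<Sum>k\<le>n. card (cons ` (trees k \<times> forests (n - k))))"
    using fin by (intro card_UN_disjoint) (auto simp: cons_def trees_def)
  also have "\<dots> = (\<Sum>k\<le>n. card (trees k) * card (forests (n - k)))"
    by (intro sum.cong refl)
      (simp add: card_image card_cartesian_product inj_on_def cons_def)
  finally show ?thesis
    using fin unfolding split forests_def[symmetric] trees_def[symmetric]
    by (subst card_Un_disjoint) (auto simp: cons_def)
qed

lemma forest_gf_eq:
  assumes "size_finite S"
  shows "forest_gf S = 1 + tree_gf S * forest_gf S"
proof (rule fps_ext)
  fix n
  show "fps_nth (forest_gf S) n = fps_nth (1 + tree_gf S * forest_gf S) n"
    using card_forests_of_size[OF assms, of n]
    by (simp add: forest_gf_def tree_gf_def fps_mult_nth atLeast0AtMost flip: of_nat_sum of_nat_mult)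
qed

lemma tree_gf_CNode_image:
  "tree_gf (CNode c ` lists Q) = fps_X * forest_gf Q"
proof (rule fps_ext)
  fix n
  show "fps_nth (tree_gf (CNode c ` lists Q)) n = fps_nth (fps_X * forest_gf Q) n"
  proof (cases n)
    case (Suc k)
    have "{T \<in> CNode c ` lists Q. nverts T = Suc k}
            = CNode c ` {ts \<in> lists Q. sum_list (map nverts ts) = k}"
      by auto
    moreover have "inj (CNode c)"
      by (simp add: inj_def)
    ultimately show ?thesis
      using Suc by (simp add: tree_gf_def forest_gf_def card_image inj_on_subset)
  qed simp
qed

lemma valid_col_root_color_less: "valid_col M B T \<Longrightarrow> root_color T < M"
  by (cases T) auto

lemma ext_matrix_old_row: "i < m \<Longrightarrow> ext_matrix m A i j \<longleftrightarrow> j < m \<and> A i j"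
  by (simp add: ext_matrix_def)

lemma ext_matrix_new_row: "m \<le> i \<Longrightarrow> ext_matrix m A i j \<longleftrightarrow> j < m \<or> j = i"
  by (auto simp: ext_matrix_def)

lemma valid_col_ext_matrix_old_root:
  "root_color T < m \<Longrightarrow> valid_col (m + m') (ext_matrix m A) T \<longleftrightarrow> valid_col m A T"
proof (induction T)
  case (CNode c ts)
  then show ?case
    by (auto simp: ext_matrix_old_row dest: valid_col_root_color_less)
qed

lemma rooted_trees_ext_matrix_new:
  fixes A :: "nat \<Rightarrow> nat \<Rightarrow> bool"
  assumes "m \<le> i" "i < m + m'"
  defines "R \<equiv> rooted_trees (m + m') (ext_matrix m A) i"
  shows "R = CNode i ` lists ({T. valid_col m A T} \<union> R)"
proof -
  have child_iff: "ext_matrix m A i (root_color t) \<and> valid_col (m + m') (ext_matrix m A) t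
                     \<longleftrightarrow> t \<in> {T. valid_col m A T} \<union> R" for t
    using valid_col_ext_matrix_old_root[of t m m' A] valid_col_root_color_less[of m A t]
    by (auto simp: ext_matrix_new_row[OF assms(1)] R_def rooted_trees_def)
  show ?thesis
  proof (intro equalityI subsetI)
    fix T assume "T \<in> R"
    moreover obtain c ts where "T = CNode c ts" by (cases T)
    ultimately show "T \<in> CNode i ` lists ({T. valid_col m A T} \<union> R)"
      using child_iff by (auto simp: R_def rooted_trees_def)
  next
    fix T assume "T \<in> CNode i ` lists ({T. valid_col m A T} \<union> R)"
    then show "T \<in> R"
      using child_iff assms by (auto simp: R_def rooted_trees_def)
  qed
qed

lemma valid_col_ext_matrix_split:
  "{T. valid_col (m + m') (ext_matrix m A) T}
     = {T. valid_col m A T} \<union> (\<Union>i\<in>{m..<m + m'}. rooted_trees (m + m') (ext_matrix m A) i)"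
  using valid_col_ext_matrix_old_root[of _ m m' A] valid_col_root_color_less
  by (fastforce simp: rooted_trees_def)

lemma FA_eq_tree_gf: "FA m A = tree_gf {T. valid_col m A T}"
  by (rule fps_ext) (simp add: FA_def tree_gf_def tA_def conj_commute)

lemma tree_gf_ext_matrix_new_root:
  fixes A :: "nat \<Rightarrow> nat \<Rightarrow> bool"
  assumes "m \<le> i" "i < m + m'"
  defines "G \<equiv> tree_gf (rooted_trees (m + m') (ext_matrix m A) i)"
  shows "G = fps_X + (FA m A + G) * G"
proof -
  let ?R = "rooted_trees (m + m') (ext_matrix m A) i"
  let ?Q = "{T. valid_col m A T} \<union> ?R"
  have fin_old: "size_finite {T. valid_col m A T}"
    by (rule size_finite_valid_col)
  have fin_new: "size_finite ?R"
    by (rule size_finite_subset[OF _ size_finite_valid_col]) (auto simp: rooted_trees_def)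
  have disjoint: "{T. valid_col m A T} \<inter> ?R = {}"
    using assms(1) by (auto simp: rooted_trees_def dest: valid_col_root_color_less)
  have Q: "tree_gf ?Q = FA m A + G"
    unfolding G_def FA_eq_tree_gf using fin_old fin_new disjoint by (rule tree_gf_Un_disjoint)
  have G_forest: "G = fps_X * forest_gf ?Q"
    unfolding G_def by (subst rooted_trees_ext_matrix_new[OF assms(1,2)]) (rule tree_gf_CNode_image)
  have "forest_gf ?Q = 1 + (FA m A + G) * forest_gf ?Q"
    using forest_gf_eq[OF size_finite_Un[OF fin_old fin_new]] unfolding Q .
  then have "G = fps_X * (1 + (FA m A + G) * forest_gf ?Q)"
    using G_forest by simp
  also have "\<dots> = fps_X + (FA m A + G) * G"
    unfolding G_forest by (simp add: algebra_simps)
  finally show ?thesis .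
qed

lemma fps_tree_equation_unique:
  fixes F G H :: "'a::idom fps"
  assumes "G = fps_X + (F + G) * G" "H = fps_X + (F + H) * H"
    and "fps_nth F 0 = 0" "fps_nth G 0 = 0" "fps_nth H 0 = 0"
  shows "G = H"
proof -
  have "(G - H) * (1 - F - G - H) = 0"
    using assms(1,2) by algebra
  moreover have "fps_nth (1 - F - G - H) 0 \<noteq> 0"
    using assms(3-5) by simp
  ultimately show ?thesis
    by auto
qed

lemma FA_ext_matrix:
  "FA (m + m') (ext_matrix m A)
     = FA m A + fps_const (real m') * tree_gf (rooted_trees (m + m') (ext_matrix m A) m)"
proof -
  let ?R = "rooted_trees (m + m') (ext_matrix m A)"
  have fin: "size_finite S" if "S \<subseteq> {T. valid_col (m + m') (ext_matrix m A) T}" for S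
    using that size_finite_valid_col by (rule size_finite_subset)
  have "FA (m + m') (ext_matrix m A) = FA m A + tree_gf (\<Union>i\<in>{m..<m + m'}. ?R i)"
    unfolding FA_eq_tree_gf valid_col_ext_matrix_split
    by (rule tree_gf_Un_disjoint)
      (auto simp: size_finite_valid_col rooted_trees_def intro!: fin dest: valid_col_root_color_less)
  also have "tree_gf (\<Union>i\<in>{m..<m + m'}. ?R i) = (\<Sum>i\<in>{m..<m + m'}. tree_gf (?R i))"
    by (rule tree_gf_UN_disjoint) (auto simp: rooted_trees_def intro!: fin)
  also have "\<dots> = (\<Sum>i\<in>{m..<m + m'}. tree_gf (?R m))"
    by (intro sum.cong refl fps_tree_equation_unique[OF tree_gf_ext_matrix_new_root
          tree_gf_ext_matrix_new_root]) (auto simp: FA_def)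
  finally show ?thesis
    by (simp add: fps_of_nat)
qed

lemma fps_quadratic_root_eq:
  fixes y P E :: "real fps"
  assumes "y^2 - P * y + E = 0" and "2 * fps_nth y 0 < fps_nth P 0"
  shows "y = fps_const (1/2) * P - fps_const (1/2) * fps_radical (\<lambda>k a. sqrt a) 2 (P^2 - 4 * E)"
proof -
  have "P^2 - 4 * E = (P - 2 * y)^2"
    using assms(1) by algebra
  moreover have "fps_radical (\<lambda>k a. sqrt a) (Suc 1) ((P - 2 * y) ^ Suc 1) = P - 2 * y"
    using assms(2) by (intro radical_power) auto
  ultimately have root: "fps_radical (\<lambda>k a. sqrt a) 2 (P^2 - 4 * E) = P - 2 * y"
    by (simp add: numeral_2_eq_2)
  have "fps_const (1/2) * P - fps_const (1/2) * (P - 2 * y) = (fps_const (1/2) * 2) * y"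
    by (simp add: algebra_simps)
  also have "fps_const (1/2 :: real) * 2 = 1"
    by (simp add: fps_numeral_fps_const)
  finally show ?thesis
    unfolding root by simp
qed

lemma tree_equation_quadratic:
  fixes F G :: "real fps" and c :: real
  assumes G: "G = fps_X + (F + G) * G" and "c \<noteq> 0"
  defines "F' \<equiv> F + fps_const c * G"
  shows "F'^2 - (fps_const c - fps_const (c - 2) * F) * F'
           + (fps_const c * F - fps_const (c - 1) * F^2 + fps_const (c^2) * fps_X) = 0"
    and "fps_const (1 / c) * F'^2 + (fps_const ((c - 2) / c) * F - 1) * F'
           + (F - fps_const ((c - 1) / c) * F^2 + fps_const c * fps_X) = 0"
proof -
  let ?C = "fps_const c"
  have const_eqs: "fps_const (c - 2) = ?C - 2" "fps_const (c - 1) = ?C - 1" "fps_const (c^2) = ?C^2"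
    by (simp_all add: fps_numeral_fps_const fps_const_power flip: fps_const_1_eq_1)
  have "F'^2 - (?C - fps_const (c - 2) * F) * F'
           + (?C * F - fps_const (c - 1) * F^2 + fps_const (c^2) * fps_X)
        = ?C^2 * (fps_X + (F + G) * G - G)"
    unfolding F'_def const_eqs by algebra
  then show monic: "F'^2 - (?C - fps_const (c - 2) * F) * F'
           + (?C * F - fps_const (c - 1) * F^2 + fps_const (c^2) * fps_X) = 0"
    using G by simp
  have inv: "fps_const (1 / c) * ?C = 1"
    using assms(2) by simp
  have quotients: "fps_const ((c - 2) / c) = fps_const (1 / c) * fps_const (c - 2)"
    "fps_const ((c - 1) / c) = fps_const (1 / c) * fps_const (c - 1)"
    by simp_all
  have "fps_const (1 / c) * F'^2 + (fps_const ((c - 2) / c) * F - 1) * F'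
           + (F - fps_const ((c - 1) / c) * F^2 + ?C * fps_X)
        = fps_const (1 / c) * (F'^2 - (?C - fps_const (c - 2) * F) * F'
           + (?C * F - fps_const (c - 1) * F^2 + fps_const (c^2) * fps_X))"
    using inv unfolding quotients const_eqs by algebra
  then show "fps_const (1 / c) * F'^2 + (fps_const ((c - 2) / c) * F - 1) * F'
           + (F - fps_const ((c - 1) / c) * F^2 + fps_const c * fps_X) = 0"
    using monic by simp
qed

theorem theorem27:
  fixes m m' :: nat and A :: "nat \<Rightarrow> nat \<Rightarrow> bool"
  assumes "m' \<ge> 1"
  defines "F \<equiv> FA m A" and "F' \<equiv> FA (m + m') (ext_matrix m A)"
  shows "fps_const (1 / real m') * F'^2
           + (fps_const ((real m' - 2) / real m') * F - 1) * F'
           + (F - fps_const ((real m' - 1) / real m') * F^2 + fps_const (real m') * fps_X) = 0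
       \<and> F' = fps_const (1/2) * (fps_const (real m') - fps_const (real m' - 2) * F)
           - fps_const (1/2) * fps_radical (\<lambda>k a. sqrt a) 2
               ((fps_const (real m') - fps_const (real m' - 2) * F)^2
                - 4 * (fps_const (real m') * F - fps_const (real m' - 1) * F^2
                       + fps_const ((real m')^2) * fps_X))"
proof -
  define G where "G = tree_gf (rooted_trees (m + m') (ext_matrix m A) m)"
  have m': "real m' \<noteq> 0"
    using assms(1) by simp
  have G_eq: "G = fps_X + (F + G) * G"
    unfolding G_def F_def using assms(1) by (intro tree_gf_ext_matrix_new_root) auto
  have F': "F' = F + fps_const (real m') * G"
    unfolding F'_def F_def G_def by (rule FA_ext_matrix)
  have "fps_nth F' 0 = 0"
    by (simp add: F'_def FA_def)
  moreover have "fps_nth F 0 = 0"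
    by (simp add: F_def FA_def)
  ultimately have "2 * fps_nth F' 0 < fps_nth (fps_const (real m') - fps_const (real m' - 2) * F) 0"
    using assms(1) by simp
  then show ?thesis
    using tree_equation_quadratic[OF G_eq m', folded F'] fps_quadratic_root_eq by blast
qed

end
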